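(* Let $P\subseteq\mathbb{R}^n$ be a rational polyhedron, $X\subseteq P$ a closed set, and $\eta\colon P\to\mathbb{R}^2$ a $\mathbb{Z}$-map. If $\eta(X)$ has a rationally outgoing $1$-tangent (at some point), then for some $k\in\{1,\ldots,n-1\}$ the set $X$ has a rationally outgoing $k$-tangent (at some point).
   Context: A rational polyhedron is a finite union of rational simplexes (simplexes whose vertices have rational coordinates). A map $\eta\colon P\to\mathbb{R}^m$ on a rational polyhedron $P$ is a $\mathbb{Z}$-map if there is a triangulation of $P$ such that on each simplex $\eta$ coincides with an affine map $\mathbb{R}^n\to\mathbb{R}^m$ with integer coefficients. $k$-tangents: Let $u=(u_1,\ldots,u_k)$ be a $k$-tuple of pairwise orthogonal unit vectors in $\mathbb{R}^N$ and for $l\le k$ let $\mathsf{p}_l$ be the orthogonal projection onto $\mathbb{R}u_1+\cdots+\mathbb{R}u_l$ ($\mathsf p_0=0$). Given $X\subseteq\mathbb{R}^N$ and $x\in\mathbb{R}^N$, $u$ is a $k$-tangent of $X$ at $x$ if there is a sequence $x_1,x_2,\ldots$ in $X$ converging to $x$ such that no vector $x_i-x$ lies in $\mathbb{R}u_1+\cdots+\mathbb{R}u_k$ and, setting $x_i^1=(x_i-x)/\|x_i-x\|$ and $x_i^l=\dfrac{x_i-x-\mathsf{p}_{l-1}(x_i-x)}{\|x_i-x-\mathsf{p}_{l-1}(x_i-x)\|}$ for $l\le k$, we have $\lim_{i\to\infty}x_i^s=u_s$ for each $s$. For $\lambda\in\mathbb{R}_{>0}^k$, $C_{x,u,\lambda}=\mathrm{conv}(x,\,x+\lambda_1u_1,\,\ldots,\,x+\lambda_1u_1+\cdots+\lambda_ku_k)$.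 A $k$-tangent $u$ of $X$ at $x$ is rationally outgoing if there exist a rational simplex $S$, a face $F$ of $S$, and $\lambda\in\mathbb{R}_{>0}^k$ such that $C_{x,u,\lambda}\subseteq S$, $C_{x,u,\lambda}\not\subseteq F$, and $F\cap X=S\cap X$. (For $N=2$, $k=1$ this means there is a $1$-tangent $u$ at $x$ and $\epsilon>0$ with $\mathrm{conv}(x,x+\epsilon u)$ having rational endpoints and meeting the set only in $x$.) *)

theory Defs
  imports "HOL-Analysis.Analysis"
begin

definition rational_point :: "real^'n \<Rightarrow> bool" where
  "rational_point v \<longleftrightarrow> (\<forall>i. v $ i \<in> \<rat>)"

definition rational_simplex :: "(real^'n) set \<Rightarrow> bool" where
  "rational_simplex S \<longleftrightarrow> (\<exists>C. finite C \<and> \<not> affine_dependent C \<and>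
      (\<forall>v\<in>C. rational_point v) \<and> S = convex hull C)"

definition rational_polyhedron :: "(real^'n) set \<Rightarrow> bool" where
  "rational_polyhedron P \<longleftrightarrow> (\<exists>\<K>. finite \<K> \<and> (\<forall>S\<in>\<K>. rational_simplex S) \<and> P = \<Union>\<K>)"

definition triangulation :: "(real^'n) set set \<Rightarrow> (real^'n) set \<Rightarrow> bool" where
  "triangulation \<K> P \<longleftrightarrow> finite \<K> \<and> (\<forall>S\<in>\<K>. rational_simplex S) \<and> \<Union>\<K> = P \<and>
     (\<forall>S\<in>\<K>. \<forall>T\<in>\<K>. (S \<inter> T) face_of S \<and> (S \<inter> T) face_of T)"

definition Z_map :: "(real^'n) set \<Rightarrow> (real^'n \<Rightarrow> real^'m) \<Rightarrow> bool" where
  "Z_map P \<eta> \<longleftrightarrow> (\<exists>\<K>. triangulation \<K> P \<and>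
     (\<forall>S\<in>\<K>. \<exists>(A::real^'n^'m) (b::real^'m).
        (\<forall>i j. A $ i $ j \<in> \<int>) \<and> (\<forall>i. b $ i \<in> \<int>) \<and>
        (\<forall>x\<in>S. \<eta> x = A *v x + b)))"

text \<open>u is indexed by 1..k. Orthogonal projection onto span of u 1, ..., u l
  (for an orthonormal family).\<close>
definition proj_first :: "(nat \<Rightarrow> real^'n) \<Rightarrow> nat \<Rightarrow> real^'n \<Rightarrow> real^'n" where
  "proj_first u l v = (\<Sum>j=1..l. (v \<bullet> u j) *\<^sub>R u j)"

definition orthonormal_tuple :: "nat \<Rightarrow> (nat \<Rightarrow> real^'n) \<Rightarrow> bool" where
  "orthonormal_tuple k u \<longleftrightarrow> (\<forall>i\<in>{1..k}. norm (u i) = 1) \<and>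
     (\<forall>i\<in>{1..k}. \<forall>j\<in>{1..k}. i \<noteq> j \<longrightarrow> u i \<bullet> u j = 0)"

definition k_tangent :: "(real^'n) set \<Rightarrow> real^'n \<Rightarrow> nat \<Rightarrow> (nat \<Rightarrow> real^'n) \<Rightarrow> bool" where
  "k_tangent X x k u \<longleftrightarrow> orthonormal_tuple k u \<and>
     (\<exists>xs::nat \<Rightarrow> real^'n. (\<forall>i. xs i \<in> X) \<and> xs \<longlonglongrightarrow> x \<and>
        (\<forall>i. xs i - x \<notin> span (u ` {1..k})) \<and>
        (\<forall>s\<in>{1..k}. (\<lambda>i. (xs i - x - proj_first u (s - 1) (xs i - x)) /\<^sub>R
                          norm (xs i - x - proj_first u (s - 1) (xs i - x))) \<longlonglongrightarrow> u s))"

definition C_set :: "real^'n \<Rightarrow> nat \<Rightarrow> (nat \<Rightarrow> real^'n) \<Rightarrow> (nat \<Rightarrow> real) \<Rightarrow> (real^'n) set" where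
  "C_set x k u lam = convex hull {x + (\<Sum>j=1..m. lam j *\<^sub>R u j) | m. m \<le> k}"

definition rationally_outgoing :: "(real^'n) set \<Rightarrow> real^'n \<Rightarrow> nat \<Rightarrow> (nat \<Rightarrow> real^'n) \<Rightarrow> bool" where
  "rationally_outgoing X x k u \<longleftrightarrow> k_tangent X x k u \<and>
     (\<exists>S F lam. rational_simplex S \<and> F face_of S \<and> (\<forall>j\<in>{1..k}. lam j > 0) \<and>
        C_set x k u lam \<subseteq> S \<and> \<not> C_set x k u lam \<subseteq> F \<and> F \<inter> X = S \<inter> X)"

end

theory Submission
  imports Defs
begin

text \<open>Lift a tangent sequence of \<open>\<eta> ` X\<close> to \<open>X\<close>. By pigeonhole infinitely many lifts lie in one
  simplex \<open>T\<close> of the triangulation, on which \<open>\<eta>\<close> is an integral affine map \<open>z \<mapsto> A z + b\<close>, and by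
  compactness a subsequence converges to some \<open>x \<in> X\<close>. Passing repeatedly to subsequences along
  which the normalised residuals of the differences converge yields orthonormal directions
  \<open>u\<^sub>1, \<dots>, u\<^sub>k\<close>, the first \<open>k - 1\<close> in \<open>ker A\<close> and \<open>A u\<^sub>k\<close> a positive multiple of the outgoing
  direction \<open>w\<close>; a complete orthonormal basis would map the differences onto the line through \<open>w\<close>,
  so \<open>k < n\<close>. The lexicographic curve \<open>x + e u\<^sub>1 + \<dots> + e\<^sup>k u\<^sub>k\<close> stays in \<open>T\<close> for small \<open>e > 0\<close>
  and is mapped into the outgoing segment. Cutting \<open>T\<close> by the preimage of the rational simplex
  \<open>S\<^sub>2\<close> witnessing the outgoing direction leaves a rational polytope, and by Caratheodory a rational
  simplex \<open>S\<close> inside it contains the curve for arbitrarily small \<open>e\<close>, hence a whole cone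
  \<open>C_set x k u \<lambda>\<close>. The preimage of the face \<open>F\<^sub>2\<close> is a face \<open>F\<close> of \<open>S\<close> with \<open>F \<inter> X = S \<inter> X\<close> missing the
  tip of the cone.\<close>

section \<open>The sign of a polynomial near zero\<close>

lemma lowest_term_tendsto:
  fixes c :: "nat \<Rightarrow> real"
  assumes "1 \<le> l" "l \<le> k" "\<And>j. 1 \<le> j \<Longrightarrow> j < l \<Longrightarrow> c j = 0"
  shows "((\<lambda>e. (\<Sum>j=1..k. c j * e^j) / e^l) \<longlongrightarrow> c l) (at_right 0)"
proof -
  let ?g = "\<lambda>e::real. \<Sum>j=l..k. c j * e^(j-l)"
  have "?g 0 = c l"
    using assms by (simp add: sum.atLeast_Suc_atMost sum.neutral)
  moreover have "(?g \<longlongrightarrow> ?g 0) (at_right 0)"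
    by (intro tendsto_intros)
  ultimately have lim: "(?g \<longlongrightarrow> c l) (at_right 0)" by simp
  have "(\<Sum>j=1..k. c j * e^j) / e^l = ?g e" if "e > 0" for e :: real
  proof -
    have "(\<Sum>j=1..k. c j * e^j) = (\<Sum>j\<in>{1..<l}. c j * e^j) + (\<Sum>j=l..k. c j * e^j)"
      using assms by (subst sum.union_disjoint[symmetric]) (auto intro!: sum.cong)
    also have "\<dots> = (\<Sum>j=l..k. c j * e^j)" using assms by simp
    also have "\<dots> = e^l * ?g e"
      unfolding sum_distrib_left by (rule sum.cong) (auto simp: power_add[symmetric])
    finally show ?thesis using that by simp
  qed
  then show ?thesis
    by (intro Lim_transform_eventually[OF lim]) (auto simp: eventually_at_right_field intro!: exI[of _ 1])
qed

lemma lowest_term_sign: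
  fixes c :: "nat \<Rightarrow> real"
  assumes "1 \<le> l" "l \<le> k" "\<And>j. 1 \<le> j \<Longrightarrow> j < l \<Longrightarrow> c j = 0"
  shows "c l < 0 \<Longrightarrow> eventually (\<lambda>e. (\<Sum>j=1..k. c j * e^j) < 0) (at_right 0)"
    and "c l > 0 \<Longrightarrow> eventually (\<lambda>e. (\<Sum>j=1..k. c j * e^j) > 0) (at_right 0)"
proof -
  have lim: "((\<lambda>e. (\<Sum>j=1..k. c j * e^j) / e^l) \<longlongrightarrow> c l) (at_right 0)"
    by (rule lowest_term_tendsto[OF assms])
  have pos: "eventually (\<lambda>e::real. e > 0) (at_right 0)"
    by (simp add: eventually_at_right_less)
  show "eventually (\<lambda>e. (\<Sum>j=1..k. c j * e^j) < 0) (at_right 0)" if "c l < 0"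
    using order_tendstoD(2)[OF lim that] pos
    by eventually_elim (auto simp: divide_less_0_iff)
  show "eventually (\<lambda>e. (\<Sum>j=1..k. c j * e^j) > 0) (at_right 0)" if "c l > 0"
    using order_tendstoD(1)[OF lim that] pos
    by eventually_elim (auto simp: zero_less_divide_iff)
qed

definition lex_nonpos :: "nat \<Rightarrow> (nat \<Rightarrow> real) \<Rightarrow> bool" where
  "lex_nonpos k c \<longleftrightarrow> (\<forall>l\<in>{1..k}. (\<forall>j\<in>{1..<l}. c j = 0) \<longrightarrow> c l \<le> 0)"

lemma lex_nonpos_mono: "lex_nonpos k c \<Longrightarrow> m \<le> k \<Longrightarrow> lex_nonpos m c"
  unfolding lex_nonpos_def by auto

lemma lex_nonpos_imp_eventually_nonpos:
  fixes c :: "nat \<Rightarrow> real"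
  assumes "lex_nonpos k c"
  shows "eventually (\<lambda>e. (\<Sum>j=1..k. c j * e^j) \<le> 0) (at_right 0)"
proof (cases "\<exists>j\<in>{1..k}. c j \<noteq> 0")
  case False
  then show ?thesis by simp
next
  case True
  define l where "l = (LEAST j. j \<in> {1..k} \<and> c j \<noteq> 0)"
  have l: "l \<in> {1..k}" "c l \<noteq> 0"
    unfolding l_def using True by (metis (mono_tags, lifting) LeastI)+
  have below: "c j = 0" if "1 \<le> j" "j < l" for j
    using not_less_Least[of j "\<lambda>j. j \<in> {1..k} \<and> c j \<noteq> 0"] that l unfolding l_def[symmetric] by auto
  have "c l < 0" using assms l below unfolding lex_nonpos_def by force
  from lowest_term_sign(1)[of l k c, OF _ _ below this] l
  show ?thesis by (auto elim: eventually_mono)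
qed

lemma frequently_nonpos_imp_lex_nonpos:
  fixes c :: "nat \<Rightarrow> real"
  assumes "frequently (\<lambda>e. (\<Sum>j=1..k. c j * e^j) \<le> 0) (at_right 0)"
  shows "lex_nonpos k c"
  unfolding lex_nonpos_def
proof (intro ballI impI, rule ccontr)
  fix l assume l: "l \<in> {1..k}" and below: "\<forall>j\<in>{1..<l}. c j = 0" and "\<not> c l \<le> 0"
  then have "eventually (\<lambda>e. (\<Sum>j=1..k. c j * e^j) > 0) (at_right 0)"
    by (intro lowest_term_sign(2)) auto
  then have "eventually (\<lambda>e. \<not> (\<Sum>j=1..k. c j * e^j) \<le> 0) (at_right 0)"
    by (rule eventually_mono) simp
  with assms show False by (simp add: frequently_def)
qed

section \<open>Lexicographic curves in polyhedra\<close>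

definition lex_curve :: "'a::real_vector \<Rightarrow> nat \<Rightarrow> (nat \<Rightarrow> 'a) \<Rightarrow> real \<Rightarrow> 'a" where
  "lex_curve x m u e = x + (\<Sum>j=1..m. e^j *\<^sub>R u j)"

lemma inner_lex_curve: "a \<bullet> lex_curve x m u e = a \<bullet> x + (\<Sum>j=1..m. (a \<bullet> u j) * e^j)"
  unfolding lex_curve_def by (simp add: inner_add_right inner_sum_right mult.commute)

lemma tendsto_inner_lex_curve: "((\<lambda>e. a \<bullet> lex_curve x m u e) \<longlongrightarrow> a \<bullet> x) (at_right 0)"
proof -
  have "((\<lambda>e. a \<bullet> lex_curve x m u e) \<longlongrightarrow> a \<bullet> x + (\<Sum>j=1..m. (a \<bullet> u j) * 0^j)) (at_right 0)"
    unfolding inner_lex_curve by (intro tendsto_intros)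
  then show ?thesis by simp
qed

lemma C_set_lex_curve: "C_set x k u (\<lambda>j. e^j) = convex hull {lex_curve x m u e | m. m \<le> k}"
  unfolding C_set_def lex_curve_def by simp

lemma matrix_vector_mult_lex_curve:
  fixes A :: "real^'n^'m"
  assumes "1 \<le> k" "\<forall>j\<in>{1..<k}. A *v u j = 0"
  shows "A *v lex_curve x k u e = A *v x + e^k *\<^sub>R (A *v u k)"
proof -
  have "A *v lex_curve x k u e = A *v x + (\<Sum>j=1..k. e^j *\<^sub>R (A *v u j))"
    unfolding lex_curve_def
    by (simp add: matrix_vector_right_distrib linear_sum[OF matrix_vector_mul_linear]
        linear_scale[OF matrix_vector_mul_linear])
  also have "(\<Sum>j=1..k. e^j *\<^sub>R (A *v u j)) = (\<Sum>j\<in>{k}. e^j *\<^sub>R (A *v u j))"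
    using assms by (intro sum.mono_neutral_right) auto
  finally show ?thesis by simp
qed

text \<open>If the curve meets a halfspace arbitrarily close to \<open>e = 0\<close>, the first nonzero coefficient of
  its defining form along \<open>u\<close> is negative, which also keeps every truncation of the curve inside.\<close>
lemma eventually_lex_curve_prefix_in_halfspace:
  assumes frequent: "frequently (\<lambda>e. a \<bullet> lex_curve x k u e \<le> b) (at_right 0)" and "m \<le> k"
  shows "eventually (\<lambda>e. a \<bullet> lex_curve x m u e \<le> b) (at_right 0)"
proof -
  have "a \<bullet> x \<le> b"
  proof (rule ccontr)
    assume "\<not> a \<bullet> x \<le> b"
    then have "eventually (\<lambda>e. \<not> a \<bullet> lex_curve x k u e \<le> b) (at_right 0)"
      using order_tendstoD(1)[OF tendsto_inner_lex_curve[of a x k u], of b] by (auto elim: eventually_mono)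
    with frequent show False by (simp add: frequently_def)
  qed
  then consider "a \<bullet> x < b" | "a \<bullet> x = b" by linarith
  then show ?thesis
  proof cases
    case 1
    show ?thesis
      using order_tendstoD(2)[OF tendsto_inner_lex_curve[of a x m u] 1] by (auto elim: eventually_mono)
  next
    case 2
    have "frequently (\<lambda>e. (\<Sum>j=1..k. (a \<bullet> u j) * e^j) \<le> 0) (at_right 0)"
      using frequent unfolding inner_lex_curve 2 by (auto elim: frequently_elim1)
    then have "lex_nonpos k (\<lambda>j. a \<bullet> u j)" by (rule frequently_nonpos_imp_lex_nonpos)
    then have "lex_nonpos m (\<lambda>j. a \<bullet> u j)" using \<open>m \<le> k\<close> by (rule lex_nonpos_mono)
    from lex_nonpos_imp_eventually_nonpos[OF this] show ?thesis
      unfolding inner_lex_curve 2 by (auto elim: eventually_mono)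
  qed
qed

lemma eventually_lex_curve_prefixes_in_polyhedron:
  fixes S :: "'a::euclidean_space set"
  assumes "polyhedron S" and frequent: "frequently (\<lambda>e. lex_curve x k u e \<in> S) (at_right 0)"
  shows "eventually (\<lambda>e. \<forall>m\<le>k. lex_curve x m u e \<in> S) (at_right 0)"
proof -
  obtain F where F: "finite F" "S = \<Inter>F" "\<forall>h\<in>F. \<exists>a b. a \<noteq> 0 \<and> h = {x. a \<bullet> x \<le> b}"
    using assms(1) unfolding polyhedron_def by blast
  have "eventually (\<lambda>e. \<forall>h\<in>F. \<forall>m\<in>{..k}. lex_curve x m u e \<in> h) (at_right 0)"
  proof (intro eventually_ball_finite ballI F(1) finite_atMost)
    fix h m assume h: "h \<in> F" and m: "m \<in> {..k}"
    obtain a b where h': "h = {x. a \<bullet> x \<le> b}" using F(3) h by blast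
    have "frequently (\<lambda>e. a \<bullet> lex_curve x k u e \<le> b) (at_right 0)"
      using frequent h h' F(2) by (auto elim!: frequently_elim1)
    from eventually_lex_curve_prefix_in_halfspace[OF this] m
    show "eventually (\<lambda>e. lex_curve x m u e \<in> h) (at_right 0)"
      by (auto simp: h')
  qed
  then show ?thesis by (rule eventually_mono) (simp add: F(2))
qed

lemma eventually_lex_curve_in_polyhedron:
  fixes S :: "'a::euclidean_space set"
  assumes "polyhedron S" "x \<in> S"
    and lex: "\<And>a b. S \<subseteq> {z. a \<bullet> z \<le> b} \<Longrightarrow> a \<bullet> x = b \<Longrightarrow> lex_nonpos k (\<lambda>j. a \<bullet> u j)"
  shows "eventually (\<lambda>e. lex_curve x k u e \<in> S) (at_right 0)"
proof -
  obtain F where F: "finite F" "S = \<Inter>F" "\<forall>h\<in>F. \<exists>a b. a \<noteq> 0 \<and> h = {x. a \<bullet> x \<le> b}"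
    using assms(1) unfolding polyhedron_def by blast
  have "eventually (\<lambda>e. \<forall>h\<in>F. lex_curve x k u e \<in> h) (at_right 0)"
  proof (intro eventually_ball_finite ballI F(1))
    fix h assume h: "h \<in> F"
    obtain a b where h': "h = {x. a \<bullet> x \<le> b}" using F(3) h by blast
    have Sh: "S \<subseteq> {z. a \<bullet> z \<le> b}" using F(2) h h' by auto
    then consider "a \<bullet> x < b" | "a \<bullet> x = b" using \<open>x \<in> S\<close> by force
    then show "eventually (\<lambda>e. lex_curve x k u e \<in> h) (at_right 0)"
    proof cases
      case 1
      show ?thesis
        using order_tendstoD(2)[OF tendsto_inner_lex_curve[of a x k u] 1] unfolding h'
        by (auto elim: eventually_mono)
    next
      case 2
      from lex_nonpos_imp_eventually_nonpos[OF lex[OF Sh 2]] show ?thesis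
        unfolding h' by (auto simp: inner_lex_curve 2 elim!: eventually_mono)
    qed
  qed
  then show ?thesis by (rule eventually_mono) (simp add: F(2))
qed

section \<open>Cutting rational polytopes by rational halfspaces\<close>

definition crossing :: "'a::real_inner \<Rightarrow> real \<Rightarrow> 'a \<Rightarrow> 'a \<Rightarrow> 'a" where
  "crossing a c v w = v + ((c - a \<bullet> v) / (a \<bullet> w - a \<bullet> v)) *\<^sub>R (w - v)"

lemma crossing_in_segment:
  assumes "a \<bullet> v \<le> c" "c < a \<bullet> w"
  shows "crossing a c v w \<in> closed_segment v w" and "a \<bullet> crossing a c v w = c"
proof -
  define t where "t = (c - a \<bullet> v) / (a \<bullet> w - a \<bullet> v)"
  have "0 \<le> t" "t \<le> 1" using assms by (auto simp: t_def divide_simps)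
  moreover have "crossing a c v w = (1 - t) *\<^sub>R v + t *\<^sub>R w"
    by (simp add: crossing_def t_def[symmetric] algebra_simps)
  ultimately show "crossing a c v w \<in> closed_segment v w"
    by (auto simp: closed_segment_def)
  show "a \<bullet> crossing a c v w = c"
    using assms by (simp add: crossing_def inner_diff_right inner_add_right)
qed

lemma scaled_crossing:
  assumes "a \<bullet> w \<noteq> a \<bullet> v"
  shows "(a \<bullet> w - a \<bullet> v) *\<^sub>R crossing a c v w = (a \<bullet> w - c) *\<^sub>R v + (c - a \<bullet> v) *\<^sub>R w"
proof -
  have e: "(a \<bullet> w - a \<bullet> v) * ((c - a \<bullet> v) / (a \<bullet> w - a \<bullet> v)) = c - a \<bullet> v"
    using assms by simp
  show ?thesis
    unfolding crossing_def scaleR_add_right scaleR_scaleR e by (simp add: algebra_simps)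
qed

lemma crossing_weights_row_sum:
  fixes a v :: "'a::real_inner"
  assumes "finite Vp" "Dm \<noteq> 0"
  shows "(\<Sum>w\<in>Vp. \<mu> v * \<mu> w * (a \<bullet> w - a \<bullet> v) / Dm) + \<mu> v * (1 - (\<Sum>w\<in>Vp. \<mu> w * (a \<bullet> w - c)) / Dm)
           = \<mu> v + \<mu> v * (c - a \<bullet> v) * sum \<mu> Vp / Dm"
proof -
  define Mp where "Mp = sum \<mu> Vp"
  define Dp where "Dp = (\<Sum>w\<in>Vp. \<mu> w * (a \<bullet> w - c))"
  have "(\<Sum>w\<in>Vp. \<mu> w * (a \<bullet> w - a \<bullet> v)) = Dp + (c - a \<bullet> v) * Mp"
    unfolding Dp_def Mp_def sum_distrib_left
    by (subst sum.distrib[symmetric]) (auto intro!: sum.cong simp: algebra_simps)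
  moreover have "(\<Sum>w\<in>Vp. \<mu> v * \<mu> w * (a \<bullet> w - a \<bullet> v) / Dm) = \<mu> v / Dm * (\<Sum>w\<in>Vp. \<mu> w * (a \<bullet> w - a \<bullet> v))"
    unfolding sum_distrib_left by (auto intro!: sum.cong)
  ultimately have "(\<Sum>w\<in>Vp. \<mu> v * \<mu> w * (a \<bullet> w - a \<bullet> v) / Dm) = \<mu> v / Dm * (Dp + (c - a \<bullet> v) * Mp)"
    by simp
  then show ?thesis
    unfolding Dp_def[symmetric] Mp_def[symmetric] using assms(2) by (simp add: field_simps)
qed

lemma crossing_weights_row_vector:
  fixes a v :: "'a::real_inner"
  assumes "\<forall>w\<in>Vp. a \<bullet> w \<noteq> a \<bullet> v" "Dm \<noteq> 0"
  shows "(\<Sum>w\<in>Vp. (\<mu> v * \<mu> w * (a \<bullet> w - a \<bullet> v) / Dm) *\<^sub>R crossing a c v w)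
           + (\<mu> v * (1 - (\<Sum>w\<in>Vp. \<mu> w * (a \<bullet> w - c)) / Dm)) *\<^sub>R v
         = \<mu> v *\<^sub>R v + (\<mu> v * (c - a \<bullet> v) / Dm) *\<^sub>R (\<Sum>w\<in>Vp. \<mu> w *\<^sub>R w)"
proof -
  define Dp where "Dp = (\<Sum>w\<in>Vp. \<mu> w * (a \<bullet> w - c))"
  have "(\<Sum>w\<in>Vp. (\<mu> v * \<mu> w * (a \<bullet> w - a \<bullet> v) / Dm) *\<^sub>R crossing a c v w)
          = (\<Sum>w\<in>Vp. (\<mu> v * \<mu> w / Dm) *\<^sub>R ((a \<bullet> w - c) *\<^sub>R v + (c - a \<bullet> v) *\<^sub>R w))"
    using assms(1) by (intro sum.cong) (simp_all add: scaled_crossing[symmetric])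
  also have "\<dots> = (\<mu> v / Dm * Dp) *\<^sub>R v + (\<mu> v * (c - a \<bullet> v) / Dm) *\<^sub>R (\<Sum>w\<in>Vp. \<mu> w *\<^sub>R w)"
    by (simp add: Dp_def sum_distrib_left scaleR_sum_left scaleR_sum_right sum.distrib
        scaleR_add_right mult_ac)
  finally show ?thesis
    unfolding Dp_def[symmetric] using assms(2) by (simp add: algebra_simps scaleR_add_left[symmetric])
qed

text \<open>The weights are \<open>\<mu> v * \<mu> w * (a \<bullet> w - a \<bullet> v) / Dm\<close> on the crossing point of \<open>(v, w)\<close>
  and \<open>\<mu> v * (1 - Dp / Dm)\<close> on \<open>v\<close>; they sum to one because \<open>Dm\<close> is the total excess below
  the hyperplane.\<close>
lemma convex_combination_via_crossings:
  fixes a :: "'a::real_inner"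
  assumes finm: "finite Vm" and finp: "finite Vp" and disj: "Vm \<inter> Vp = {}"
    and below: "\<forall>v\<in>Vm. a \<bullet> v \<le> c" and above: "\<forall>w\<in>Vp. c < a \<bullet> w"
    and nonneg: "\<forall>x\<in>Vm \<union> Vp. 0 \<le> \<mu> x" and total: "sum \<mu> Vm + sum \<mu> Vp = 1"
    and Dp: "0 < Dp" "Dp = (\<Sum>w\<in>Vp. \<mu> w * (a \<bullet> w - c))"
    and Dm: "Dp \<le> Dm" "Dm = (\<Sum>v\<in>Vm. \<mu> v * (c - a \<bullet> v))"
  shows "(\<Sum>v\<in>Vm. \<mu> v *\<^sub>R v) + (\<Sum>w\<in>Vp. \<mu> w *\<^sub>R w)
           \<in> convex hull (Vm \<union> (\<lambda>(v, w). crossing a c v w) ` (Vm \<times> Vp))"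
proof -
  let ?G = "Vm \<union> (\<lambda>(v, w). crossing a c v w) ` (Vm \<times> Vp)"
  have "0 < Dm" using Dp Dm by simp
  have separated: "a \<bullet> v < a \<bullet> w" if "v \<in> Vm" "w \<in> Vp" for v w
    using below above that by force
  define I where "I = Vm \<times> Vp \<union> (\<lambda>v. (v, v)) ` Vm"
  define \<omega> where "\<omega> = (\<lambda>(v, w). if w \<in> Vp then \<mu> v * \<mu> w * (a \<bullet> w - a \<bullet> v) / Dm
                                  else \<mu> v * (1 - Dp / Dm))"
  define \<pi> where "\<pi> = (\<lambda>(v, w). if w \<in> Vp then crossing a c v w else v)"
  have sum_I: "sum f I = (\<Sum>v\<in>Vm. (\<Sum>w\<in>Vp. f (v, w)) + f (v, v))"
    for f :: "'a \<times> 'a \<Rightarrow> 'b::comm_monoid_add"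
  proof -
    have "Vm \<times> Vp \<inter> (\<lambda>v. (v, v)) ` Vm = {}" using disj by auto
    then show ?thesis
      unfolding I_def sum.distrib using finm finp
      by (subst sum.union_disjoint) (auto simp: sum.cartesian_product sum.reindex inj_on_def)
  qed
  have diag: "v \<notin> Vp" if "v \<in> Vm" for v using that disj by blast
  define Mp where "Mp = sum \<mu> Vp"
  have "sum \<omega> I = (\<Sum>v\<in>Vm. \<mu> v + \<mu> v * (c - a \<bullet> v) * Mp / Dm)"
    unfolding sum_I Mp_def using crossing_weights_row_sum[OF finp] \<open>0 < Dm\<close> Dp(2) diag
    by (intro sum.cong) (simp_all add: \<omega>_def)
  also have "\<dots> = sum \<mu> Vm + Mp / Dm * Dm"
    unfolding sum.distrib Dm(2) sum_distrib_left by (auto intro!: sum.cong)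
  finally have "sum \<omega> I = 1" using \<open>0 < Dm\<close> total by (simp add: Mp_def)
  moreover have "\<forall>i\<in>I. 0 \<le> \<omega> i"
    using nonneg \<open>0 < Dm\<close> Dm separated
    by (auto simp: I_def \<omega>_def less_imp_le intro!: mult_nonneg_nonneg divide_nonneg_pos)
  moreover have "\<forall>i\<in>I. \<pi> i \<in> convex hull ?G"
    using disj by (auto simp: I_def \<pi>_def intro!: hull_inc)
  moreover have "finite I" using finm finp by (simp add: I_def)
  ultimately have "(\<Sum>i\<in>I. \<omega> i *\<^sub>R \<pi> i) \<in> convex hull ?G"
    by (intro convex_sum[OF _ convex_convex_hull]) simp_all
  moreover have "(\<Sum>i\<in>I. \<omega> i *\<^sub>R \<pi> i)
      = (\<Sum>v\<in>Vm. \<mu> v *\<^sub>R v + (\<mu> v * (c - a \<bullet> v) / Dm) *\<^sub>R (\<Sum>w\<in>Vp. \<mu> w *\<^sub>R w))"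
  proof (unfold sum_I, rule sum.cong)
    fix v assume "v \<in> Vm"
    then have "\<forall>w\<in>Vp. a \<bullet> w \<noteq> a \<bullet> v" using separated by force
    from crossing_weights_row_vector[OF this, of Dm \<mu> c] \<open>0 < Dm\<close> diag[OF \<open>v \<in> Vm\<close>] Dp(2)
    show "(\<Sum>w\<in>Vp. \<omega> (v, w) *\<^sub>R \<pi> (v, w)) + \<omega> (v, v) *\<^sub>R \<pi> (v, v)
        = \<mu> v *\<^sub>R v + (\<mu> v * (c - a \<bullet> v) / Dm) *\<^sub>R (\<Sum>w\<in>Vp. \<mu> w *\<^sub>R w)"
      by (simp add: \<omega>_def \<pi>_def)
  qed simp
  also have "\<dots> = (\<Sum>v\<in>Vm. \<mu> v *\<^sub>R v) + (Dm / Dm) *\<^sub>R (\<Sum>w\<in>Vp. \<mu> w *\<^sub>R w)"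
    unfolding sum.distrib Dm(2) scaleR_sum_left[symmetric] sum_divide_distrib[symmetric] by simp
  ultimately show ?thesis using \<open>0 < Dm\<close> by simp
qed

lemma convex_hull_Int_halfspace_subset:
  fixes V :: "'a::real_inner set"
  assumes "finite V" and "z \<in> convex hull V" and "a \<bullet> z \<le> c"
  defines "Vm \<equiv> {v\<in>V. a \<bullet> v \<le> c}" and "Vp \<equiv> {v\<in>V. c < a \<bullet> v}"
  shows "z \<in> convex hull (Vm \<union> (\<lambda>(v, w). crossing a c v w) ` (Vm \<times> Vp))"
proof -
  obtain \<mu> where nonneg: "\<forall>x\<in>V. 0 \<le> \<mu> x" and total: "sum \<mu> V = 1"
    and z: "(\<Sum>x\<in>V. \<mu> x *\<^sub>R x) = z"
    using assms(1,2) by (auto simp: convex_hull_finite)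
  have fin: "finite Vm" "finite Vp" using assms(1) by (auto simp: Vm_def Vp_def)
  have disj: "Vm \<inter> Vp = {}" by (auto simp: Vm_def Vp_def)
  have split: "sum f V = sum f Vm + sum f Vp" for f :: "'a \<Rightarrow> 'b::comm_monoid_add"
  proof -
    have "V = Vm \<union> Vp" by (auto simp: Vm_def Vp_def)
    then show ?thesis using sum.union_disjoint[OF fin disj] by simp
  qed
  define Dm where "Dm = (\<Sum>v\<in>Vm. \<mu> v * (c - a \<bullet> v))"
  define Dp where "Dp = (\<Sum>w\<in>Vp. \<mu> w * (a \<bullet> w - c))"
  have "c - a \<bullet> z = (\<Sum>x\<in>V. \<mu> x * (c - a \<bullet> x))"
    using z total by (auto simp: inner_sum_right right_diff_distrib sum_subtractf sum_distrib_right[symmetric])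
  also have "\<dots> = Dm - Dp"
    unfolding split Dm_def Dp_def by (simp add: algebra_simps) (simp add: sum.distrib[symmetric])
  finally have "Dp \<le> Dm" using \<open>a \<bullet> z \<le> c\<close> by simp
  have "0 \<le> Dp" unfolding Dp_def using nonneg by (auto simp: Vp_def intro!: sum_nonneg)
  then consider "Dp = 0" | "0 < Dp" by linarith
  then show ?thesis
  proof cases
    case 1
    then have "\<forall>w\<in>Vp. \<mu> w * (a \<bullet> w - c) = 0"
      unfolding Dp_def using fin nonneg by (subst sum_nonneg_eq_0_iff[symmetric]) (auto simp: Vp_def)
    then have "\<forall>w\<in>Vp. \<mu> w = 0" by (auto simp: Vp_def)
    then have "z \<in> convex hull Vm"
      using z total nonneg fin unfolding split by (auto simp: convex_hull_finite Vm_def)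
    then show ?thesis by (meson hull_mono subsetD sup_ge1)
  next
    case 2
    show ?thesis
      using convex_combination_via_crossings[OF fin disj _ _ _ _ 2 Dp_def \<open>Dp \<le> Dm\<close> Dm_def] nonneg total
      unfolding split z[symmetric] by (auto simp: Vm_def Vp_def)
  qed
qed

text \<open>\<open>R\<close> is an abstract notion of rational point, so that it applies to product spaces.\<close>
lemma convex_hull_Int_rational_halfspace:
  fixes R :: "'a::real_inner \<Rightarrow> bool"
  assumes R_add: "\<And>v w. R v \<Longrightarrow> R w \<Longrightarrow> R (v + w)"
    and R_scale: "\<And>q v. q \<in> \<rat> \<Longrightarrow> R v \<Longrightarrow> R (q *\<^sub>R v)"
    and R_inner: "\<And>v. R v \<Longrightarrow> a \<bullet> v \<in> \<rat>" and "c \<in> \<rat>"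
    and "finite V" and RV: "\<forall>v\<in>V. R v"
  obtains V' where "finite V'" "\<forall>v\<in>V'. R v" "convex hull V \<inter> {z. a \<bullet> z \<le> c} = convex hull V'"
proof -
  define Vm where "Vm \<equiv> {v\<in>V. a \<bullet> v \<le> c}"
  define Vp where "Vp \<equiv> {v\<in>V. c < a \<bullet> v}"
  let ?G = "Vm \<union> (\<lambda>(v, w). crossing a c v w) ` (Vm \<times> Vp)"
  have crossings: "crossing a c v w \<in> convex hull V \<inter> {z. a \<bullet> z \<le> c} \<and> R (crossing a c v w)"
    if "v \<in> Vm" "w \<in> Vp" for v w
  proof -
    have v: "v \<in> V" "a \<bullet> v \<le> c" and w: "w \<in> V" "c < a \<bullet> w"
      using that by (auto simp: Vm_def Vp_def)
    have "closed_segment v w \<subseteq> convex hull V"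
      using v w by (simp add: closed_segment_subset hull_inc)
    then have "crossing a c v w \<in> convex hull V \<inter> {z. a \<bullet> z \<le> c}"
      using crossing_in_segment[OF v(2) w(2)] by auto
    moreover have "(c - a \<bullet> v) / (a \<bullet> w - a \<bullet> v) \<in> \<rat>"
      using R_inner RV v w \<open>c \<in> \<rat>\<close> by auto
    then have "R (v + ((c - a \<bullet> v) / (a \<bullet> w - a \<bullet> v)) *\<^sub>R (w + (-1) *\<^sub>R v))"
      using RV v w by (intro R_add R_scale) auto
    then have "R (crossing a c v w)" by (simp add: crossing_def)
    ultimately show ?thesis by blast
  qed
  show ?thesis
  proof
    show "finite ?G" using \<open>finite V\<close> by (auto simp: Vm_def Vp_def)
    show "\<forall>v\<in>?G. R v" using RV crossings by (auto simp: Vm_def)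
    have "?G \<subseteq> convex hull V \<inter> {z. a \<bullet> z \<le> c}"
      using crossings by (auto simp: Vm_def intro: hull_inc)
    then have "convex hull ?G \<subseteq> convex hull V \<inter> {z. a \<bullet> z \<le> c}"
      by (intro hull_minimal convex_Int convex_convex_hull convex_halfspace_le)
    moreover have "convex hull V \<inter> {z. a \<bullet> z \<le> c} \<subseteq> convex hull ?G"
      using convex_hull_Int_halfspace_subset[OF \<open>finite V\<close>, of _ a c] unfolding Vm_def Vp_def by blast
    ultimately show "convex hull V \<inter> {z. a \<bullet> z \<le> c} = convex hull ?G" by blast
  qed
qed

lemma convex_hull_Int_rational_halfspaces:
  fixes R :: "'a::real_inner \<Rightarrow> bool"
  assumes R_add: "\<And>v w. R v \<Longrightarrow> R w \<Longrightarrow> R (v + w)"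
    and R_scale: "\<And>q v. q \<in> \<rat> \<Longrightarrow> R v \<Longrightarrow> R (q *\<^sub>R v)"
    and "finite H" and H: "\<forall>(a, c)\<in>H. c \<in> \<rat> \<and> (\<forall>v. R v \<longrightarrow> a \<bullet> v \<in> \<rat>)"
    and "finite V" "\<forall>v\<in>V. R v"
  shows "\<exists>V'. finite V' \<and> (\<forall>v\<in>V'. R v) \<and>
           convex hull V \<inter> {z. \<forall>(a, c)\<in>H. a \<bullet> z \<le> c} = convex hull V'"
  using \<open>finite H\<close> H \<open>finite V\<close> \<open>\<forall>v\<in>V. R v\<close>
proof (induction H arbitrary: V rule: finite_induct)
  case empty
  then show ?case by auto
next
  case (insert h H)
  obtain a c where h: "h = (a, c)" by force
  obtain V1 where V1: "finite V1" "\<forall>v\<in>V1. R v" "convex hull V \<inter> {z. a \<bullet> z \<le> c} = convex hull V1"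
    using convex_hull_Int_rational_halfspace[OF R_add R_scale, of a c V] insert.prems h by auto
  obtain V2 where "finite V2" "\<forall>v\<in>V2. R v"
      "convex hull V1 \<inter> {z. \<forall>(a, c)\<in>H. a \<bullet> z \<le> c} = convex hull V2"
    using insert.IH[OF _ V1(1,2)] insert.prems by auto
  moreover have "convex hull V \<inter> {z. \<forall>(a, c)\<in>insert h H. a \<bullet> z \<le> c}
        = (convex hull V \<inter> {z. a \<bullet> z \<le> c}) \<inter> {z. \<forall>(a, c)\<in>H. a \<bullet> z \<le> c}"
    using h by auto
  ultimately show ?case using V1 by auto
qed

section \<open>Rational polytopes\<close>

lemma rational_simplex_imp_polyhedron: "rational_simplex S \<Longrightarrow> polyhedron S"
  unfolding rational_simplex_def by (metis polytope_def polytope_imp_polyhedron)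

lemma rational_point_inner: "rational_point a \<Longrightarrow> rational_point v \<Longrightarrow> a \<bullet> v \<in> \<rat>"
  unfolding rational_point_def inner_vec_def by (intro Rats_sum) simp

text \<open>The preimage is cut out of \<open>convex hull (VT \<times> W)\<close> by the rational halfspaces
  \<open>\<pm>(A z + b - w)\<^sub>i \<le> 0\<close> and then projected to the first factor.\<close>
lemma rational_polytope_Int_affine_preimage:
  fixes A :: "real^'n^'m" and b :: "real^'m"
  assumes "finite VT" "\<forall>v\<in>VT. rational_point v" and "finite W" "\<forall>w\<in>W. rational_point w"
    and A: "\<forall>i j. A$i$j \<in> \<rat>" and b: "\<forall>i. b$i \<in> \<rat>"
  obtains V where "finite V" "\<forall>v\<in>V. rational_point v"
    "{z \<in> convex hull VT. A *v z + b \<in> convex hull W} = convex hull V"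
proof -
  define R :: "(real^'n) \<times> (real^'m) \<Rightarrow> bool"
    where "R p \<longleftrightarrow> rational_point (fst p) \<and> rational_point (snd p)" for p
  define H where "H = (\<lambda>i. ((A$i, - axis i 1), - b$i)) ` UNIV \<union> (\<lambda>i. ((- A$i, axis i (1::real)), b$i)) ` UNIV"
  have R_add: "R v \<Longrightarrow> R w \<Longrightarrow> R (v + w)" for v w by (auto simp: R_def rational_point_def)
  have R_scale: "q \<in> \<rat> \<Longrightarrow> R v \<Longrightarrow> R (q *\<^sub>R v)" for q v by (auto simp: R_def rational_point_def)
  have "rational_point (A$i)" "rational_point (- A$i)" for i
    using A by (auto simp: rational_point_def)
  moreover have "rational_point (axis i (1::real) :: real^'m)" "rational_point (- axis i (1::real) :: real^'m)" for i
    by (auto simp: rational_point_def axis_def)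
  ultimately have "\<forall>(a, c)\<in>H. c \<in> \<rat> \<and> (\<forall>v. R v \<longrightarrow> a \<bullet> v \<in> \<rat>)"
    unfolding H_def R_def using b by (auto simp: inner_prod_def intro!: Rats_add rational_point_inner)
  moreover have "finite H" by (simp add: H_def)
  moreover have "\<forall>v\<in>VT \<times> W. R v" using assms(2,4) by (auto simp: R_def)
  ultimately obtain V' where V': "finite V'" "\<forall>v\<in>V'. R v"
    "convex hull (VT \<times> W) \<inter> {z. \<forall>(a, c)\<in>H. a \<bullet> z \<le> c} = convex hull V'"
    using convex_hull_Int_rational_halfspaces[OF R_add R_scale, of H "VT \<times> W"] assms(1,3) by blast
  have graph: "(\<forall>(a, c)\<in>H. a \<bullet> (z, w) \<le> c) \<longleftrightarrow> A *v z + b = w" for z w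
  proof -
    have "(\<forall>(a, c)\<in>H. a \<bullet> (z, w) \<le> c) \<longleftrightarrow> (\<forall>i. (A *v z)$i - w$i \<le> - b$i \<and> - (A *v z)$i + w$i \<le> b$i)"
      unfolding H_def by (simp add: ball_Un matrix_vector_mul_component inner_axis' all_conj_distrib)
    also have "\<dots> \<longleftrightarrow> (\<forall>i. (A *v z + b)$i = w$i)"
      by (rule all_cong1) (simp; arith)
    finally show ?thesis by (simp add: vec_eq_iff)
  qed
  have "{z \<in> convex hull VT. A *v z + b \<in> convex hull W} =
        fst ` (convex hull (VT \<times> W) \<inter> {z. \<forall>(a, c)\<in>H. a \<bullet> z \<le> c})"
  proof
    show "{z \<in> convex hull VT. A *v z + b \<in> convex hull W}
            \<subseteq> fst ` (convex hull (VT \<times> W) \<inter> {z. \<forall>(a, c)\<in>H. a \<bullet> z \<le> c})"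
    proof
      fix z assume "z \<in> {z \<in> convex hull VT. A *v z + b \<in> convex hull W}"
      then show "z \<in> fst ` (convex hull (VT \<times> W) \<inter> {z. \<forall>(a, c)\<in>H. a \<bullet> z \<le> c})"
        by (intro image_eqI[of z fst "(z, A *v z + b)"]) (auto simp: convex_hull_Times graph)
    qed
  qed (use graph in \<open>auto simp: convex_hull_Times\<close>)
  also have "\<dots> = convex hull (fst ` V')"
    unfolding V'(3) by (rule convex_hull_linear_image[OF linear_fst])
  finally have "{z \<in> convex hull VT. A *v z + b \<in> convex hull W} = convex hull (fst ` V')" .
  moreover have "finite (fst ` V')" "\<forall>v\<in>fst ` V'. rational_point v"
    using V'(1,2) by (auto simp: R_def)
  ultimately show ?thesis using that by blast
qed

lemma convex_hull_affine_independent_subset: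
  fixes V :: "'a::euclidean_space set"
  assumes "finite V" "z \<in> convex hull V"
  obtains W where "W \<subseteq> V" "\<not> affine_dependent W" "z \<in> convex hull W"
proof -
  define P where "P n \<longleftrightarrow> (\<exists>W\<subseteq>V. card W = n \<and> z \<in> convex hull W)" for n
  have "P (card V)" using assms unfolding P_def by blast
  then have "\<exists>n. P n" by blast
  define n where "n = (LEAST n. P n)"
  have "P n" unfolding n_def using \<open>\<exists>n. P n\<close> by (rule LeastI_ex)
  then obtain W where W: "W \<subseteq> V" "card W = n" "z \<in> convex hull W" unfolding P_def by blast
  have "finite W" using W(1) assms(1) finite_subset by blast
  have "\<not> affine_dependent W"
  proof
    assume dep: "affine_dependent W"
    obtain S where S: "finite S" "S \<subseteq> W" "card S \<le> aff_dim W + 1" "z \<in> convex hull S"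
      using W(3) caratheodory_aff_dim[of W] by blast
    have "aff_dim W < int (card W) - 1"
      using dep \<open>finite W\<close> affine_independent_iff_card[of W] aff_dim_le_card[OF \<open>finite W\<close>] by linarith
    then have "card S < n" using S(3) W(2) by linarith
    moreover have "P (card S)" unfolding P_def using S W(1) by blast
    ultimately show False using not_less_Least[of "card S" P] unfolding n_def by blast
  qed
  then show ?thesis using W that by blast
qed

lemma lex_curve_cone_in_rational_simplex:
  assumes "finite V" "\<forall>v\<in>V. rational_point v"
    and curve: "eventually (\<lambda>e. lex_curve x k u e \<in> convex hull V) (at_right 0)"
  obtains S e where "rational_simplex S" "S \<subseteq> convex hull V" "0 < e" "C_set x k u (\<lambda>j. e^j) \<subseteq> S"
proof -
  define \<W> where "\<W> = {W. W \<subseteq> V \<and> \<not> affine_dependent W}"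
  have "finite \<W>" unfolding \<W>_def using \<open>finite V\<close> by simp
  have "eventually (\<lambda>e. \<exists>W\<in>\<W>. lex_curve x k u e \<in> convex hull W) (at_right 0)"
  proof (rule eventually_mono[OF curve])
    fix e assume "lex_curve x k u e \<in> convex hull V"
    then obtain W where "W \<subseteq> V" "\<not> affine_dependent W" "lex_curve x k u e \<in> convex hull W"
      using convex_hull_affine_independent_subset[OF \<open>finite V\<close>] by blast
    then show "\<exists>W\<in>\<W>. lex_curve x k u e \<in> convex hull W" unfolding \<W>_def by blast
  qed
  then have "frequently (\<lambda>e. \<exists>W\<in>\<W>. lex_curve x k u e \<in> convex hull W) (at_right 0)"
    by (simp add: eventually_frequently)
  from frequently_bex_finite[OF \<open>finite \<W>\<close> this] obtain W where "W \<in> \<W>"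
    and frequent: "frequently (\<lambda>e. lex_curve x k u e \<in> convex hull W) (at_right 0)"
    by blast
  then have W: "W \<subseteq> V" "\<not> affine_dependent W" unfolding \<W>_def by auto
  have S: "rational_simplex (convex hull W)"
    unfolding rational_simplex_def using W assms(1,2) finite_subset by blast
  have "eventually (\<lambda>e. \<forall>m\<le>k. lex_curve x m u e \<in> convex hull W) (at_right 0)"
    by (rule eventually_lex_curve_prefixes_in_polyhedron[OF rational_simplex_imp_polyhedron[OF S] frequent])
  moreover have "eventually (\<lambda>e::real. 0 < e) (at_right 0)" by (simp add: eventually_at_right_less)
  ultimately have "eventually (\<lambda>e. 0 < e \<and> (\<forall>m\<le>k. lex_curve x m u e \<in> convex hull W)) (at_right 0)"
    by (rule eventually_conj[rotated])
  then obtain e where "0 < e" "\<forall>m\<le>k. lex_curve x m u e \<in> convex hull W"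
    using eventually_happens'[OF trivial_limit_at_right_real] by blast
  then have "C_set x k u (\<lambda>j. e^j) \<subseteq> convex hull W"
    unfolding C_set_lex_curve by (intro hull_minimal convex_convex_hull) auto
  moreover have "convex hull W \<subseteq> convex hull V" using W(1) by (rule hull_mono)
  ultimately show ?thesis using that S \<open>0 < e\<close> by blast
qed

section \<open>Flags of tangent directions\<close>

definition normalized_residual :: "(nat \<Rightarrow> real^'n) \<Rightarrow> nat \<Rightarrow> real^'n \<Rightarrow> real^'n" where
  "normalized_residual u l v = (v - proj_first u l v) /\<^sub>R norm (v - proj_first u l v)"

text \<open>For \<open>d i = x\<^sub>i - x\<close> this is the convergence condition in \<open>k_tangent\<close>, along the subsequence \<open>\<sigma>\<close>.\<close>
definition tangent_flag :: "(nat \<Rightarrow> real^'n) \<Rightarrow> nat \<Rightarrow> (nat \<Rightarrow> nat) \<Rightarrow> (nat \<Rightarrow> real^'n) \<Rightarrow> bool" where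
  "tangent_flag d s \<sigma> u \<longleftrightarrow> strict_mono \<sigma> \<and> orthonormal_tuple s u \<and>
     (\<forall>l\<in>{1..s}. (\<lambda>i. normalized_residual u (l - 1) (d (\<sigma> i))) \<longlonglongrightarrow> u l)"

lemma proj_first_inner:
  assumes "orthonormal_tuple s u" "j \<in> {1..s}"
  shows "proj_first u s v \<bullet> u j = v \<bullet> u j"
proof -
  have "proj_first u s v \<bullet> u j = (\<Sum>i=1..s. (v \<bullet> u i) * (u i \<bullet> u j))"
    unfolding proj_first_def by (simp add: inner_sum_left)
  also have "\<dots> = (\<Sum>i\<in>{j}. (v \<bullet> u i) * (u i \<bullet> u j))"
    using assms by (intro sum.mono_neutral_right) (auto simp: orthonormal_tuple_def)
  also have "\<dots> = v \<bullet> u j"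
    using assms by (simp add: orthonormal_tuple_def inner_commute norm_eq_1[symmetric] dot_square_norm)
  finally show ?thesis .
qed

lemma inner_normalized_residual_eq_0:
  assumes "orthonormal_tuple s u" "j \<in> {1..s}"
  shows "normalized_residual u s v \<bullet> u j = 0"
  using proj_first_inner[OF assms] by (simp add: normalized_residual_def inner_diff_left)

lemma matrix_vector_mult_proj_first:
  fixes A :: "real^'n^'m"
  assumes "\<forall>j\<in>{1..s}. A *v u j = 0"
  shows "A *v proj_first u s v = 0"
  unfolding proj_first_def using assms
  by (simp add: linear_sum[OF matrix_vector_mul_linear] linear_scale[OF matrix_vector_mul_linear])

lemma proj_first_cong:
  assumes "\<forall>j\<in>{1..l}. u' j = u j"
  shows "proj_first u' l v = proj_first u l v"
  unfolding proj_first_def using assms by (auto intro!: sum.cong)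

lemma normalized_residual_fun_upd:
  assumes "l \<le> Suc s"
  shows "normalized_residual (u(Suc s := v)) (l - 1) z = normalized_residual u (l - 1) z"
proof -
  have "\<forall>j\<in>{1..l - 1}. (u(Suc s := v)) j = u j" using assms by auto
  then have "proj_first (u(Suc s := v)) (l - 1) z = proj_first u (l - 1) z" by (rule proj_first_cong)
  then show ?thesis by (simp add: normalized_residual_def)
qed

lemma matrix_vector_mult_span_subset:
  fixes A :: "real^'n^'m"
  assumes "\<forall>z\<in>B. A *v z \<in> span C" "z \<in> span B"
  shows "A *v z \<in> span C"
proof -
  have "A *v z \<in> (\<lambda>z. A *v z) ` span B" using assms(2) by blast
  also have "\<dots> = span ((\<lambda>z. A *v z) ` B)"
    by (rule span_linear_image[OF matrix_vector_mul_linear, symmetric])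
  also have "\<dots> \<subseteq> span C"
    using assms(1) by (intro span_minimal subspace_span) auto
  finally show ?thesis .
qed

lemma orthonormal_tuple_span_UNIV:
  fixes u :: "nat \<Rightarrow> real^'n"
  assumes "orthonormal_tuple CARD('n) u"
  shows "span (u ` {1..CARD('n)}) = UNIV"
proof -
  let ?B = "u ` {1..CARD('n)}"
  have "inj_on u {1..CARD('n)}"
  proof
    fix i j assume i: "i \<in> {1..CARD('n)}" and j: "j \<in> {1..CARD('n)}" and "u i = u j"
    show "i = j"
    proof (rule ccontr)
      assume "i \<noteq> j"
      then have "u i \<bullet> u j = 0" using assms i j by (auto simp: orthonormal_tuple_def)
      moreover have "u i \<bullet> u i = 1" using assms i by (simp add: orthonormal_tuple_def dot_square_norm)
      ultimately show False using \<open>u i = u j\<close> by simp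
    qed
  qed
  then have "dim (UNIV :: (real^'n) set) \<le> card ?B" by (simp add: card_image)
  moreover have "independent ?B"
    using assms by (intro pairwise_orthogonal_independent)
      (auto simp: pairwise_def orthogonal_def orthonormal_tuple_def)
  ultimately have "UNIV \<subseteq> span ?B" by (intro card_ge_dim_independent[OF subset_UNIV])
  then show ?thesis by auto
qed

lemma matrix_vector_mult_flag_span:
  fixes A :: "real^'n^'m" and k :: nat
  assumes "\<forall>j\<in>{1..<k}. A *v u j = 0" "A *v u k \<in> span {w}" "z \<in> span (u ` {1..k})"
  shows "A *v z \<in> span {w}"
proof (rule matrix_vector_mult_span_subset[OF _ assms(3)], safe)
  fix j assume j: "j \<in> {1..k}"
  show "A *v u j \<in> span {w}"
  proof (cases "j = k")
    case False
    then have "j \<in> {1..<k}" using j by auto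
    then show ?thesis using assms(1) by (simp add: span_zero)
  qed (use assms(2) in simp)
qed

lemma tangent_flag_extend:
  assumes flag: "tangent_flag d s \<sigma> u"
    and off_span: "\<forall>i. d (\<sigma> i) \<noteq> proj_first u s (d (\<sigma> i))"
  obtains \<tau> v where "strict_mono \<tau>" "tangent_flag d (Suc s) (\<sigma> \<circ> \<tau>) (u(Suc s := v))"
    "(\<lambda>i. normalized_residual u s (d (\<sigma> (\<tau> i)))) \<longlonglongrightarrow> v"
proof -
  have on: "orthonormal_tuple s u" and sm: "strict_mono \<sigma>"
    and conv: "\<forall>l\<in>{1..s}. (\<lambda>i. normalized_residual u (l - 1) (d (\<sigma> i))) \<longlonglongrightarrow> u l"
    using flag by (auto simp: tangent_flag_def)
  have "\<forall>i. normalized_residual u s (d (\<sigma> i)) \<in> sphere 0 1"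
    using off_span by (simp add: normalized_residual_def)
  then obtain v \<tau> where "v \<in> sphere 0 1" and \<tau>: "strict_mono \<tau>"
    and "((\<lambda>i. normalized_residual u s (d (\<sigma> i))) \<circ> \<tau>) \<longlonglongrightarrow> v"
    by (rule seq_compactE[OF compact_imp_seq_compact[OF compact_sphere]])
  then have lim: "(\<lambda>i. normalized_residual u s (d (\<sigma> (\<tau> i)))) \<longlonglongrightarrow> v"
    by (simp add: o_def)
  have orth: "v \<bullet> u j = 0" if "j \<in> {1..s}" for j
    using tendsto_inner[OF lim tendsto_const, of "u j"] inner_normalized_residual_eq_0[OF on that]
    by (simp add: LIMSEQ_const_iff)
  define u' where "u' = u(Suc s := v)"
  have "orthonormal_tuple (Suc s) u'"
    using on \<open>v \<in> sphere 0 1\<close> orth unfolding orthonormal_tuple_def u'_def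
    by (auto simp: le_Suc_eq inner_commute)
  moreover have "(\<lambda>i. normalized_residual u' (l - 1) (d ((\<sigma> \<circ> \<tau>) i))) \<longlonglongrightarrow> u' l"
    if l: "l \<in> {1..Suc s}" for l
  proof -
    have same: "normalized_residual u' (l - 1) z = normalized_residual u (l - 1) z" for z
      unfolding u'_def by (rule normalized_residual_fun_upd) (use l in simp)
    show ?thesis
    proof (cases "l = Suc s")
      case True
      then show ?thesis unfolding same using lim by (simp add: u'_def)
    next
      case False
      then have "l \<in> {1..s}" using l by auto
      then have "(\<lambda>i. normalized_residual u (l - 1) (d (\<sigma> i))) \<longlonglongrightarrow> u l" using conv by blast
      from LIMSEQ_subseq_LIMSEQ[OF this \<tau>] show ?thesis
        unfolding same using False by (simp add: u'_def o_def)
    qed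
  qed
  ultimately have "tangent_flag d (Suc s) (\<sigma> \<circ> \<tau>) u'"
    unfolding tangent_flag_def using strict_mono_o[OF sm \<tau>] by blast
  then show ?thesis using that \<tau> lim unfolding u'_def by blast
qed

lemma residual_limit_image:
  fixes A :: "real^'n^'m"
  assumes ker: "\<forall>j\<in>{1..s}. A *v u j = 0" and nonzero: "\<forall>i. A *v d i \<noteq> 0"
    and res: "(\<lambda>i. normalized_residual u s (d i)) \<longlonglongrightarrow> v"
    and dir: "(\<lambda>i. (A *v d i) /\<^sub>R norm (A *v d i)) \<longlonglongrightarrow> w"
  shows "A *v v = norm (A *v v) *\<^sub>R w"
proof -
  define r where "r i = d i - proj_first u s (d i)" for i
  have Ar: "A *v r i = A *v d i" for i
    unfolding r_def using matrix_vector_mult_proj_first[OF ker] by (simp add: matrix_vector_mult_diff_distrib)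
  define q where "q i = norm (A *v d i) / norm (r i)" for i
  have scaled: "A *v normalized_residual u s (d i) = q i *\<^sub>R ((A *v d i) /\<^sub>R norm (A *v d i))" for i
    using nonzero unfolding normalized_residual_def r_def[symmetric] q_def
    by (simp add: linear_scale[OF matrix_vector_mul_linear] Ar inverse_eq_divide)
  have lim: "(\<lambda>i. A *v normalized_residual u s (d i)) \<longlonglongrightarrow> A *v v"
    using res by (rule bounded_linear.tendsto[OF matrix_vector_mul_bounded_linear])
  have "norm (A *v normalized_residual u s (d i)) = q i" for i
    unfolding scaled using nonzero by (simp add: q_def)
  then have "q \<longlonglongrightarrow> norm (A *v v)" using tendsto_norm[OF lim] by simp
  then have "(\<lambda>i. A *v normalized_residual u s (d i)) \<longlonglongrightarrow> norm (A *v v) *\<^sub>R w"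
    unfolding scaled using dir by (rule tendsto_scaleR)
  with lim show ?thesis by (rule LIMSEQ_unique)
qed

lemma tangent_flag_extend_in_kernel:
  fixes A :: "real^'n^'m"
  assumes nonzero: "\<forall>i. A *v d i \<noteq> 0" and dir: "(\<lambda>i. (A *v d i) /\<^sub>R norm (A *v d i)) \<longlonglongrightarrow> w"
    and flag: "tangent_flag d s \<sigma> u" and ker: "\<forall>j\<in>{1..s}. A *v u j = 0"
  obtains \<sigma>' v where "tangent_flag d (Suc s) \<sigma>' (u(Suc s := v))" "A *v v = norm (A *v v) *\<^sub>R w"
proof -
  have "\<forall>i. d (\<sigma> i) \<noteq> proj_first u s (d (\<sigma> i))"
    using nonzero matrix_vector_mult_proj_first[OF ker] by metis
  with flag obtain \<tau> v where flag': "tangent_flag d (Suc s) (\<sigma> \<circ> \<tau>) (u(Suc s := v))"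
    and res: "(\<lambda>i. normalized_residual u s (d (\<sigma> (\<tau> i)))) \<longlonglongrightarrow> v"
    by (rule tangent_flag_extend)
  have "strict_mono (\<sigma> \<circ> \<tau>)" using flag' by (simp add: tangent_flag_def)
  from LIMSEQ_subseq_LIMSEQ[OF dir this]
  have "(\<lambda>i. (A *v d (\<sigma> (\<tau> i))) /\<^sub>R norm (A *v d (\<sigma> (\<tau> i)))) \<longlonglongrightarrow> w" by (simp add: o_def)
  from residual_limit_image[OF ker _ res this] nonzero
  have "A *v v = norm (A *v v) *\<^sub>R w" by blast
  with flag' show ?thesis by (rule that)
qed

lemma tangent_flag_in_kernel_or_onto_direction:
  fixes d :: "nat \<Rightarrow> real^'n" and A :: "real^'n^'m"
  assumes nonzero: "\<forall>i. A *v d i \<noteq> 0" and dir: "(\<lambda>i. (A *v d i) /\<^sub>R norm (A *v d i)) \<longlonglongrightarrow> w"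
  shows "(\<exists>k \<sigma> u. 1 \<le> k \<and> k \<le> s \<and> tangent_flag d k \<sigma> u \<and> (\<forall>j\<in>{1..<k}. A *v u j = 0) \<and>
            A *v u k \<noteq> 0 \<and> A *v u k = norm (A *v u k) *\<^sub>R w)
         \<or> (\<exists>\<sigma> u. tangent_flag d s \<sigma> u \<and> (\<forall>j\<in>{1..s}. A *v u j = 0))"
proof (induction s)
  case 0
  have "tangent_flag d 0 id u" for u
    by (simp add: tangent_flag_def orthonormal_tuple_def strict_mono_def)
  then show ?case by auto
next
  case (Suc s)
  then show ?case
  proof (elim disjE exE conjE)
    fix \<sigma> u assume "tangent_flag d s \<sigma> u" and ker: "\<forall>j\<in>{1..s}. A *v u j = 0"
    then obtain \<sigma>' v where flag: "tangent_flag d (Suc s) \<sigma>' (u(Suc s := v))"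
      and image: "A *v v = norm (A *v v) *\<^sub>R w"
      by (rule tangent_flag_extend_in_kernel[OF nonzero dir])
    have ker': "\<forall>j\<in>{1..<Suc s}. A *v (u(Suc s := v)) j = 0" using ker by simp
    show ?case
    proof (cases "A *v v = 0")
      case True
      then have "\<forall>j\<in>{1..Suc s}. A *v (u(Suc s := v)) j = 0" using ker' by auto
      then show ?thesis using flag by blast
    next
      case False
      then have "A *v (u(Suc s := v)) (Suc s) \<noteq> 0 \<and>
          A *v (u(Suc s := v)) (Suc s) = norm (A *v (u(Suc s := v)) (Suc s)) *\<^sub>R w"
        by (simp add: image[symmetric])
      moreover have "1 \<le> Suc s" "Suc s \<le> Suc s" by simp_all
      ultimately show ?thesis using flag ker' by blast
    qed
  qed (use le_SucI in blast)
qed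

text \<open>The flag stops growing inside \<open>ker A\<close> at some \<open>k < n\<close>: a full flag spans \<open>\<real>\<^sup>n\<close> and would
  put the image of \<open>d\<close> on the line \<open>span {w}\<close>.\<close>
lemma exists_tangent_flag_onto_direction:
  fixes d :: "nat \<Rightarrow> real^'n" and A :: "real^'n^'m"
  assumes off_line: "\<forall>i. A *v d i \<notin> span {w}"
    and dir: "(\<lambda>i. (A *v d i) /\<^sub>R norm (A *v d i)) \<longlonglongrightarrow> w"
  obtains k \<sigma> u where "1 \<le> k" "k < CARD('n)" "tangent_flag d k \<sigma> u" "\<forall>j\<in>{1..<k}. A *v u j = 0"
    "A *v u k \<noteq> 0" "A *v u k = norm (A *v u k) *\<^sub>R w"
proof -
  have nonzero: "\<forall>i. A *v d i \<noteq> 0" using off_line span_zero by metis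
  have full_flag_off_line: "\<not> (A *v u CARD('n) \<in> span {w})"
    if "tangent_flag d CARD('n) \<sigma> u" "\<forall>j\<in>{1..<CARD('n)}. A *v u j = 0" for \<sigma> u
  proof
    assume "A *v u CARD('n) \<in> span {w}"
    moreover have "d 0 \<in> span (u ` {1..CARD('n)})"
      using that(1) orthonormal_tuple_span_UNIV[of u] by (simp add: tangent_flag_def)
    ultimately show False using matrix_vector_mult_flag_span[OF that(2)] off_line by blast
  qed
  from tangent_flag_in_kernel_or_onto_direction[OF nonzero dir, of "CARD('n)"] show ?thesis
  proof (elim disjE exE conjE)
    fix k \<sigma> u assume k: "1 \<le> k" "k \<le> CARD('n)" "tangent_flag d k \<sigma> u" "\<forall>j\<in>{1..<k}. A *v u j = 0"
      "A *v u k \<noteq> 0" "A *v u k = norm (A *v u k) *\<^sub>R w"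
    have "A *v u k \<in> span {w}" by (subst k(6)) (intro span_mul span_base singletonI)
    then have "k \<noteq> CARD('n)" using full_flag_off_line k(3,4) by blast
    with k show ?thesis by (intro that) simp_all
  next
    fix \<sigma> u assume flag: "tangent_flag d CARD('n) \<sigma> u" and ker: "\<forall>j\<in>{1..CARD('n)}. A *v u j = 0"
    have "CARD('n) \<in> {1..CARD('n)}" using finite_UNIV_card_ge_0[where 'a='n] by simp
    then have "A *v u CARD('n) \<in> span {w}" using ker by (simp add: span_zero)
    with full_flag_off_line[OF flag] ker show ?thesis by simp
  qed
qed

lemma lex_nonpos_of_tangent_flag:
  assumes flag: "tangent_flag d k \<sigma> u" and nonpos: "\<forall>i. a \<bullet> d (\<sigma> i) \<le> 0"
  shows "lex_nonpos k (\<lambda>j. a \<bullet> u j)"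
  unfolding lex_nonpos_def
proof (intro ballI impI)
  fix l assume l: "l \<in> {1..k}" and below: "\<forall>j\<in>{1..<l}. a \<bullet> u j = 0"
  have "a \<bullet> proj_first u (l - 1) v = 0" for v
    unfolding proj_first_def using below by (auto simp: inner_sum_right intro!: sum.neutral)
  then have "a \<bullet> normalized_residual u (l - 1) (d (\<sigma> i)) \<le> 0" for i
    unfolding normalized_residual_def using nonpos by (simp add: inner_diff_right mult_nonneg_nonpos)
  moreover have "(\<lambda>i. a \<bullet> normalized_residual u (l - 1) (d (\<sigma> i))) \<longlonglongrightarrow> a \<bullet> u l"
    using flag l by (intro tendsto_intros) (auto simp: tangent_flag_def)
  ultimately show "a \<bullet> u l \<le> 0"
    by (intro LIMSEQ_le_const2[where X="\<lambda>i. a \<bullet> normalized_residual u (l - 1) (d (\<sigma> i))"]) auto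
qed

section \<open>Lifting an outgoing direction through a Z-map\<close>

lemma Z_map_affine_subsequence:
  fixes \<eta> :: "real^'n \<Rightarrow> real^'m" and xs :: "nat \<Rightarrow> real^'n"
  assumes "Z_map P \<eta>" "X \<subseteq> P" "closed X" "\<forall>i. xs i \<in> X"
  obtains T A b x \<phi> where "rational_simplex T" "\<forall>i j. A$i$j \<in> \<int>" "\<forall>i. b$i \<in> \<int>"
    "\<forall>z\<in>T. \<eta> z = A *v z + b" "x \<in> T \<inter> X" "strict_mono \<phi>" "\<forall>i. xs (\<phi> i) \<in> T"
    "(\<lambda>i. xs (\<phi> i)) \<longlonglongrightarrow> x"
proof -
  obtain K where K: "triangulation K P" and affine: "\<forall>S\<in>K. \<exists>(A::real^'n^'m) (b::real^'m).
      (\<forall>i j. A$i$j \<in> \<int>) \<and> (\<forall>i. b$i \<in> \<int>) \<and> (\<forall>x\<in>S. \<eta> x = A *v x + b)"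
    using assms(1) unfolding Z_map_def by blast
  have "finite K" "\<forall>S\<in>K. rational_simplex S" "\<Union>K = P"
    using K unfolding triangulation_def by auto
  then have "\<forall>i\<in>UNIV. \<exists>T\<in>K. xs i \<in> T" using assms(2,4) by blast
  from pigeonhole_infinite_rel[OF infinite_UNIV_nat \<open>finite K\<close>, of "\<lambda>i T. xs i \<in> T"] this
  obtain T where "T \<in> K" and "infinite {i. xs i \<in> T}" by auto
  then obtain r :: "nat \<Rightarrow> nat" where r: "strict_mono r" "\<forall>i. xs (r i) \<in> T"
    using infinite_enumerate by blast
  obtain A b where Ab: "\<forall>i j. A$i$j \<in> \<int>" "\<forall>i. b$i \<in> \<int>" "\<forall>z\<in>T. \<eta> z = A *v z + b"
    using affine \<open>T \<in> K\<close> by blast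
  have T: "rational_simplex T" using \<open>T \<in> K\<close> \<open>\<forall>S\<in>K. rational_simplex S\<close> by blast
  then have "compact (T \<inter> X)"
    unfolding rational_simplex_def using \<open>closed X\<close> by (auto intro: compact_Int_closed finite_imp_compact_convex_hull)
  moreover have "\<forall>i. (xs \<circ> r) i \<in> T \<inter> X" using r assms(4) by simp
  ultimately obtain x \<rho> where "x \<in> T \<inter> X" "strict_mono \<rho>" "((xs \<circ> r) \<circ> \<rho>) \<longlonglongrightarrow> x"
    by (rule seq_compactE[OF compact_imp_seq_compact])
  moreover have "strict_mono (r \<circ> \<rho>)" using r(1) \<open>strict_mono \<rho>\<close> by (rule strict_mono_o)
  ultimately show ?thesis
    using that[OF T Ab, of x "r \<circ> \<rho>"] r(2) by (simp add: o_def)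
qed

lemma k_tangent_through_affine_map:
  fixes A :: "real^'n^'m" and zs :: "nat \<Rightarrow> real^'n"
  assumes T: "polyhedron T" "x \<in> T" and zs: "\<forall>i. zs i \<in> X \<inter> T" "zs \<longlonglongrightarrow> x"
    and off_line: "\<forall>i. A *v (zs i - x) \<notin> span {w}"
    and dir: "(\<lambda>i. (A *v (zs i - x)) /\<^sub>R norm (A *v (zs i - x))) \<longlonglongrightarrow> w"
  obtains k u where "1 \<le> k" "k < CARD('n)" "k_tangent X x k u" "\<forall>j\<in>{1..<k}. A *v u j = 0"
    "A *v u k \<noteq> 0" "A *v u k = norm (A *v u k) *\<^sub>R w"
    "eventually (\<lambda>e. lex_curve x k u e \<in> T) (at_right 0)"
proof -
  define d where "d i = zs i - x" for i
  obtain k \<sigma> u where k: "1 \<le> k" "k < CARD('n)" and flag: "tangent_flag d k \<sigma> u"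
    and ker: "\<forall>j\<in>{1..<k}. A *v u j = 0"
    and Auk: "A *v u k \<noteq> 0" "A *v u k = norm (A *v u k) *\<^sub>R w"
    using exists_tangent_flag_onto_direction[of A d w] off_line dir unfolding d_def by blast
  have "strict_mono \<sigma>" using flag by (simp add: tangent_flag_def)
  have "A *v u k \<in> span {w}" by (subst Auk(2)) (intro span_mul span_base singletonI)
  then have "zs (\<sigma> i) - x \<notin> span (u ` {1..k})" for i
    using matrix_vector_mult_flag_span[OF ker] off_line by blast
  then have "k_tangent X x k u"
    unfolding k_tangent_def using flag zs LIMSEQ_subseq_LIMSEQ[OF zs(2) \<open>strict_mono \<sigma>\<close>]
    by (intro conjI exI[of _ "zs \<circ> \<sigma>"]) (auto simp: tangent_flag_def normalized_residual_def d_def)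
  moreover have "eventually (\<lambda>e. lex_curve x k u e \<in> T) (at_right 0)"
  proof (rule eventually_lex_curve_in_polyhedron[OF T])
    fix a c assume "T \<subseteq> {z. a \<bullet> z \<le> c}" "a \<bullet> x = c"
    then have "\<forall>i. a \<bullet> d (\<sigma> i) \<le> 0" using zs(1) by (auto simp: d_def inner_diff_right)
    with flag show "lex_nonpos k (\<lambda>j. a \<bullet> u j)" by (rule lex_nonpos_of_tangent_flag)
  qed
  ultimately show ?thesis using that k ker Auk by blast
qed

lemma eventually_in_closed_segment:
  fixes w :: "'a::real_vector"
  assumes "0 < l" "0 \<le> c" "1 \<le> k"
  shows "eventually (\<lambda>e. y + (e^k * c) *\<^sub>R w \<in> closed_segment y (y + l *\<^sub>R w)) (at_right 0)"
proof -
  have "((\<lambda>e::real. e^k * c) \<longlongrightarrow> 0^k * c) (at_right 0)" by (intro tendsto_intros)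
  then have "((\<lambda>e::real. e^k * c) \<longlongrightarrow> 0) (at_right 0)" using \<open>1 \<le> k\<close> by (simp add: power_0_left)
  from order_tendstoD(2)[OF this \<open>0 < l\<close>]
  have "eventually (\<lambda>e::real. e^k * c < l) (at_right 0)" .
  moreover have "eventually (\<lambda>e::real. 0 < e) (at_right 0)" by (simp add: eventually_at_right_less)
  ultimately show ?thesis
  proof eventually_elim
    case (elim e)
    define t where "t = e^k * c / l"
    have "0 \<le> t" using elim(2) assms(1,2) by (simp add: t_def)
    moreover have "t \<le> 1" using elim(1) assms(1) by (simp add: t_def)
    moreover have "(1 - t) *\<^sub>R y + t *\<^sub>R (y + l *\<^sub>R w) = y + (t * l) *\<^sub>R w"
      by (simp add: algebra_simps)
    moreover have "t * l = e^k * c" using assms(1) by (simp add: t_def)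
    ultimately show ?case unfolding closed_segment_def by (auto intro!: exI[of _ t])
  qed
qed

lemma face_of_polyhedron_outgoing_segment:
  fixes S :: "'a::euclidean_space set"
  assumes "polyhedron S" "F face_of S" "y \<in> F"
    and "closed_segment y (y + w) \<subseteq> S" "\<not> closed_segment y (y + w) \<subseteq> F"
  obtains h \<beta> where "S \<subseteq> {z. h \<bullet> z \<le> \<beta>}" "F = S \<inter> {z. h \<bullet> z = \<beta>}" "h \<bullet> y = \<beta>" "h \<bullet> w < 0"
proof -
  have "F exposed_face_of S"
    using assms(1,2) exposed_face_of_polyhedron by blast
  then obtain h \<beta> where S: "S \<subseteq> {z. h \<bullet> z \<le> \<beta>}" and F: "F = S \<inter> {z. h \<bullet> z = \<beta>}"
    unfolding exposed_face_of_def by blast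
  have hy: "h \<bullet> y = \<beta>" using \<open>y \<in> F\<close> F by blast
  have "y + w \<in> S" using assms(4) by auto
  then have "h \<bullet> w \<le> 0" using S hy by (auto simp: inner_add_right)
  moreover have "h \<bullet> w \<noteq> 0"
  proof
    assume "h \<bullet> w = 0"
    then have "y + w \<in> F" using \<open>y + w \<in> S\<close> hy F by (simp add: inner_add_right)
    then have "closed_segment y (y + w) \<subseteq> F"
      using \<open>y \<in> F\<close> face_of_imp_convex[OF assms(2)] by (simp add: closed_segment_subset)
    with assms(5) show False ..
  qed
  ultimately show ?thesis using that S F hy by simp
qed

lemma face_of_affine_preimage_supporting_hyperplane:
  fixes A :: "real^'n^'m"
  assumes "convex S" "\<forall>z\<in>S. h \<bullet> (A *v z + b) \<le> \<beta>"
  shows "S \<inter> {z. h \<bullet> (A *v z + b) = \<beta>} face_of S"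
proof -
  have pullback: "h \<bullet> (A *v z + b) = (h v* A) \<bullet> z + h \<bullet> b" for z
    by (simp add: inner_add_right dot_lmul_matrix)
  have "S \<inter> {z. (h v* A) \<bullet> z = \<beta> - h \<bullet> b} face_of S"
    using assms by (intro face_of_Int_supporting_hyperplane_le) (auto simp: pullback)
  moreover have "{z. (h v* A) \<bullet> z = \<beta> - h \<bullet> b} = {z. h \<bullet> (A *v z + b) = \<beta>}"
    by (auto simp: pullback)
  ultimately show ?thesis by simp
qed

lemma face_of_affine_preimage_of_face:
  fixes A :: "real^'n^'m" and \<eta> :: "real^'n \<Rightarrow> real^'m"
  assumes "convex S" and affine: "\<forall>z\<in>S. \<eta> z = A *v z + b \<and> \<eta> z \<in> S2"
    and h: "S2 \<subseteq> {z. h \<bullet> z \<le> \<beta>}" "F2 = S2 \<inter> {z. h \<bullet> z = \<beta>}" and F2: "F2 \<inter> \<eta> ` X = S2 \<inter> \<eta> ` X"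
  shows "S \<inter> {z. h \<bullet> (A *v z + b) = \<beta>} face_of S" "S \<inter> {z. h \<bullet> (A *v z + b) = \<beta>} \<inter> X = S \<inter> X"
proof -
  show "S \<inter> {z. h \<bullet> (A *v z + b) = \<beta>} face_of S"
    using \<open>convex S\<close> affine h(1) by (intro face_of_affine_preimage_supporting_hyperplane) auto
  have "h \<bullet> (A *v z + b) = \<beta>" if "z \<in> S \<inter> X" for z
  proof -
    have "\<eta> z \<in> S2" using that affine by blast
    moreover have "\<eta> z \<in> \<eta> ` X" using that by blast
    ultimately have "\<eta> z \<in> S2 \<inter> \<eta> ` X" by blast
    then have "\<eta> z \<in> F2" using F2 by blast
    then show ?thesis using that affine h(2) by auto
  qed
  then show "S \<inter> {z. h \<bullet> (A *v z + b) = \<beta>} \<inter> X = S \<inter> X" by blast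
qed

lemma lex_curve_cone_in_rational_simplex_preimage:
  fixes A :: "real^'n^'m"
  assumes "rational_simplex T" "rational_simplex S2" "\<forall>i j. A$i$j \<in> \<rat>" "\<forall>i. b$i \<in> \<rat>"
    and "eventually (\<lambda>e. lex_curve x k u e \<in> T \<and> A *v lex_curve x k u e + b \<in> S2) (at_right 0)"
  obtains S e where "rational_simplex S" "\<forall>z\<in>S. z \<in> T \<and> A *v z + b \<in> S2" "0 < e"
    "C_set x k u (\<lambda>j. e^j) \<subseteq> S"
proof -
  obtain VT W where "finite VT" "\<forall>v\<in>VT. rational_point v" "T = convex hull VT"
    and "finite W" "\<forall>w\<in>W. rational_point w" "S2 = convex hull W"
    using assms(1,2) unfolding rational_simplex_def by blast
  then obtain V where V: "finite V" "\<forall>v\<in>V. rational_point v"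
      "{z \<in> T. A *v z + b \<in> S2} = convex hull V"
    using rational_polytope_Int_affine_preimage[OF _ _ _ _ assms(3,4), of VT W] by blast
  have "eventually (\<lambda>e. lex_curve x k u e \<in> convex hull V) (at_right 0)"
    using assms(5) by (rule eventually_mono) (simp add: V(3)[symmetric])
  then obtain S e where "rational_simplex S" "S \<subseteq> convex hull V" "0 < e" "C_set x k u (\<lambda>j. e^j) \<subseteq> S"
    by (rule lex_curve_cone_in_rational_simplex[OF V(1,2)])
  moreover have "\<forall>z\<in>S. z \<in> T \<and> A *v z + b \<in> S2" using \<open>S \<subseteq> convex hull V\<close> V(3) by blast
  ultimately show ?thesis using that by blast
qed

text \<open>The image of the lexicographic curve under \<open>A z + b\<close> runs along the outgoing segment of
  \<open>\<eta> ` X\<close>, so the face of \<open>S2\<close> pulls back to a face of a rational simplex around the curve that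
  misses its endpoint.\<close>
lemma rationally_outgoing_of_affine_lift:
  fixes \<eta> :: "real^'n \<Rightarrow> real^'m" and A :: "real^'n^'m"
  assumes T: "rational_simplex T" and A: "\<forall>i j. A$i$j \<in> \<rat>" and b: "\<forall>i. b$i \<in> \<rat>"
    and affine: "\<forall>z\<in>T. \<eta> z = A *v z + b" and x: "x \<in> T \<inter> X" "\<eta> x = y"
    and tangent: "k_tangent X x k u" and curve: "eventually (\<lambda>e. lex_curve x k u e \<in> T) (at_right 0)"
    and k: "1 \<le> k" "\<forall>j\<in>{1..<k}. A *v u j = 0" "A *v u k = c *\<^sub>R w" "0 < c"
    and S2: "rational_simplex S2" "F2 face_of S2" "F2 \<inter> \<eta> ` X = S2 \<inter> \<eta> ` X"
    and segment: "0 < l" "closed_segment y (y + l *\<^sub>R w) \<subseteq> S2" "\<not> closed_segment y (y + l *\<^sub>R w) \<subseteq> F2"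
  shows "rationally_outgoing X x k u"
proof -
  have image: "A *v lex_curve x k u e + b = y + (e^k * c) *\<^sub>R w" for e
    using matrix_vector_mult_lex_curve[OF k(1,2)] affine x k(3) by (simp add: algebra_simps)
  have "eventually (\<lambda>e. lex_curve x k u e \<in> T \<and> A *v lex_curve x k u e + b \<in> S2) (at_right 0)"
    using curve eventually_in_closed_segment[OF segment(1) less_imp_le[OF k(4)] k(1), of y w]
    by eventually_elim (use image segment(2) in auto)
  then obtain S e where S: "rational_simplex S" "\<forall>z\<in>S. z \<in> T \<and> A *v z + b \<in> S2" "0 < e"
      "C_set x k u (\<lambda>j. e^j) \<subseteq> S"
    by (rule lex_curve_cone_in_rational_simplex_preimage[OF T S2(1) A b])
  have "y \<in> S2" using segment(2) ends_in_segment(1) by blast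
  moreover have "y \<in> \<eta> ` X" using x by (auto intro: image_eqI)
  ultimately have "y \<in> F2" using S2(3) by blast
  obtain h \<beta> where h: "S2 \<subseteq> {z. h \<bullet> z \<le> \<beta>}" "F2 = S2 \<inter> {z. h \<bullet> z = \<beta>}" "h \<bullet> y = \<beta>" "h \<bullet> (l *\<^sub>R w) < 0"
    by (rule face_of_polyhedron_outgoing_segment[OF rational_simplex_imp_polyhedron[OF S2(1)] S2(2)
          \<open>y \<in> F2\<close> segment(2,3)])
  define F where "F = S \<inter> {z. h \<bullet> (A *v z + b) = \<beta>}"
  have "convex S" using rational_simplex_imp_polyhedron[OF S(1)] by (rule polyhedron_imp_convex)
  moreover have "\<forall>z\<in>S. \<eta> z = A *v z + b \<and> \<eta> z \<in> S2" using S(2) affine by simp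
  ultimately have "F face_of S" "F \<inter> X = S \<inter> X"
    unfolding F_def using face_of_affine_preimage_of_face[OF _ _ h(1,2) S2(3)] by blast+
  moreover have "\<not> C_set x k u (\<lambda>j. e^j) \<subseteq> F"
  proof
    have "lex_curve x k u e \<in> C_set x k u (\<lambda>j. e^j)"
      unfolding C_set_lex_curve by (rule hull_inc) auto
    moreover assume "C_set x k u (\<lambda>j. e^j) \<subseteq> F"
    ultimately have "h \<bullet> (y + (e^k * c) *\<^sub>R w) = \<beta>" using image by (auto simp: F_def)
    moreover have "h \<bullet> w < 0" using h(4) segment(1) by (simp add: mult_less_0_iff)
    ultimately show False using h(3) \<open>0 < e\<close> k(4) by (simp add: inner_add_right mult_pos_neg)
  qed
  moreover have "\<forall>j\<in>{1..k}. 0 < e^j" using \<open>0 < e\<close> by simp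
  ultimately show ?thesis
    unfolding rationally_outgoing_def using tangent S(1,4) by blast
qed

lemma rationally_outgoing_1E:
  assumes "rationally_outgoing Y y 1 U"
  obtains w ys S F l where "\<forall>i. ys i \<in> Y" "ys \<longlonglongrightarrow> y" "\<forall>i. ys i - y \<notin> span {w}"
    "(\<lambda>i. (ys i - y) /\<^sub>R norm (ys i - y)) \<longlonglongrightarrow> w" "rational_simplex S" "F face_of S" "F \<inter> Y = S \<inter> Y"
    "0 < l" "closed_segment y (y + l *\<^sub>R w) \<subseteq> S" "\<not> closed_segment y (y + l *\<^sub>R w) \<subseteq> F"
proof -
  obtain S F lam where SF: "rational_simplex S" "F face_of S" "F \<inter> Y = S \<inter> Y" and "0 < lam 1"
    and C: "C_set y 1 U lam \<subseteq> S" "\<not> C_set y 1 U lam \<subseteq> F"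
    using assms unfolding rationally_outgoing_def by auto
  have "{f m | m. m \<le> (1::nat)} = {f 0, f 1}" for f :: "nat \<Rightarrow> _"
    by (auto simp: le_Suc_eq)
  from this[of "\<lambda>m. y + (\<Sum>j=1..m. lam j *\<^sub>R U j)"]
  have "C_set y 1 U lam = closed_segment y (y + lam 1 *\<^sub>R U 1)"
    by (simp add: C_set_def segment_convex_hull)
  moreover obtain ys where "\<forall>i. ys i \<in> Y" "ys \<longlonglongrightarrow> y" "\<forall>i. ys i - y \<notin> span {U 1}"
    "(\<lambda>i. (ys i - y) /\<^sub>R norm (ys i - y)) \<longlonglongrightarrow> U 1"
    using assms unfolding rationally_outgoing_def k_tangent_def by (auto simp: proj_first_def)
  ultimately show ?thesis using that[of ys "U 1" S F "lam 1"] SF C \<open>0 < lam 1\<close> by simp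
qed

lemma Z_map_lift_convergent_sequence:
  fixes \<eta> :: "real^'n \<Rightarrow> real^'m"
  assumes "Z_map P \<eta>" "X \<subseteq> P" "closed X" and ys: "\<forall>i. ys i \<in> \<eta> ` X" "ys \<longlonglongrightarrow> y"
  obtains T A b x zs \<phi> where "rational_simplex T" "\<forall>i j. A$i$j \<in> \<int>" "\<forall>i. b$i \<in> \<int>"
    "\<forall>z\<in>T. \<eta> z = A *v z + b" "x \<in> T \<inter> X" "\<eta> x = y" "\<forall>i. zs i \<in> X \<inter> T" "zs \<longlonglongrightarrow> x"
    "strict_mono \<phi>" "\<forall>i. A *v (zs i - x) = ys (\<phi> i) - y"
proof -
  have "\<forall>i. \<exists>z. z \<in> X \<and> \<eta> z = ys i" using ys(1) unfolding image_iff by metis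
  then obtain xs where "\<forall>i. xs i \<in> X \<and> \<eta> (xs i) = ys i" by (rule choice[THEN exE])
  then have xs: "\<forall>i. xs i \<in> X" "\<forall>i. \<eta> (xs i) = ys i" by simp_all
  obtain T A b x \<phi> where T: "rational_simplex T" "\<forall>i j. A$i$j \<in> \<int>" "\<forall>i. b$i \<in> \<int>"
    and affine: "\<forall>z\<in>T. \<eta> z = A *v z + b" and x: "x \<in> T \<inter> X" and \<phi>: "strict_mono \<phi>"
    and in_T: "\<forall>i. xs (\<phi> i) \<in> T" and lim: "(\<lambda>i. xs (\<phi> i)) \<longlonglongrightarrow> x"
    using Z_map_affine_subsequence[OF assms(1-3) xs(1)] by blast
  have ys_\<phi>: "ys (\<phi> i) = A *v xs (\<phi> i) + b" for i
    using xs(2) affine in_T by (metis (no_types))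
  have "(\<lambda>i. ys (\<phi> i)) \<longlonglongrightarrow> A *v x + b"
    unfolding ys_\<phi> by (intro tendsto_add tendsto_const bounded_linear.tendsto[OF matrix_vector_mul_bounded_linear] lim)
  moreover have "(\<lambda>i. ys (\<phi> i)) \<longlonglongrightarrow> y" using LIMSEQ_subseq_LIMSEQ[OF ys(2) \<phi>] by (simp add: o_def)
  ultimately have y: "y = A *v x + b" by (rule LIMSEQ_unique[rotated])
  then have "\<eta> x = y" using affine x by simp
  moreover have "A *v (xs (\<phi> i) - x) = ys (\<phi> i) - y" for i
    unfolding ys_\<phi> y by (simp add: matrix_vector_mult_diff_distrib)
  ultimately show ?thesis
    using that[OF T affine x, of "\<lambda>i. xs (\<phi> i)" \<phi>] xs(1) in_T lim \<phi> by blast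
qed

theorem mainTheorem4:
  fixes P X :: "(real^'n) set" and \<eta> :: "real^'n \<Rightarrow> real^2"
  assumes "rational_polyhedron P" and "X \<subseteq> P" and "closed X" and "Z_map P \<eta>"
    and "\<exists>y u. rationally_outgoing (\<eta> ` X) y 1 u"
  shows "\<exists>k\<in>{1..CARD('n) - 1}. \<exists>x u. rationally_outgoing X x k u"
proof -
  obtain y U where "rationally_outgoing (\<eta> ` X) y 1 U" using assms(5) by blast
  then obtain w ys S2 F2 l where ys: "\<forall>i. ys i \<in> \<eta> ` X" "ys \<longlonglongrightarrow> y"
    and off_line: "\<forall>i. ys i - y \<notin> span {w}" and dir: "(\<lambda>i. (ys i - y) /\<^sub>R norm (ys i - y)) \<longlonglongrightarrow> w"
    and S2: "rational_simplex S2" "F2 face_of S2" "F2 \<inter> \<eta> ` X = S2 \<inter> \<eta> ` X"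
    and segment: "0 < l" "closed_segment y (y + l *\<^sub>R w) \<subseteq> S2" "\<not> closed_segment y (y + l *\<^sub>R w) \<subseteq> F2"
    by (rule rationally_outgoing_1E)
  obtain T A b x zs \<phi> where T: "rational_simplex T" "\<forall>i j. A$i$j \<in> \<int>" "\<forall>i. b$i \<in> \<int>"
    and affine: "\<forall>z\<in>T. \<eta> z = A *v z + b" and x: "x \<in> T \<inter> X" "\<eta> x = y"
    and zs: "\<forall>i. zs i \<in> X \<inter> T" "zs \<longlonglongrightarrow> x" and \<phi>: "strict_mono \<phi>"
    and image: "\<forall>i. A *v (zs i - x) = ys (\<phi> i) - y"
    using Z_map_lift_convergent_sequence[OF assms(4,2,3) ys] by blast
  have "(\<lambda>i. (A *v (zs i - x)) /\<^sub>R norm (A *v (zs i - x))) \<longlonglongrightarrow> w"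
    using LIMSEQ_subseq_LIMSEQ[OF dir \<phi>] by (simp add: image o_def)
  then obtain k u where k: "1 \<le> k" "k < CARD('n)" and tangent: "k_tangent X x k u"
    and ker: "\<forall>j\<in>{1..<k}. A *v u j = 0" and Auk: "A *v u k \<noteq> 0" "A *v u k = norm (A *v u k) *\<^sub>R w"
    and curve: "eventually (\<lambda>e. lex_curve x k u e \<in> T) (at_right 0)"
    using k_tangent_through_affine_map[OF rational_simplex_imp_polyhedron[OF T(1)] _ zs, of A w] x off_line image
    by auto
  have "\<forall>i j. A$i$j \<in> \<rat>" "\<forall>i. b$i \<in> \<rat>" using T(2,3) Ints_subset_Rats by blast+
  then have "rationally_outgoing X x k u"
    using rationally_outgoing_of_affine_lift[OF T(1) _ _ affine x tangent curve k(1) ker Auk(2) _ S2 segment]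
      Auk(1) by simp
  moreover have "k \<in> {1..CARD('n) - 1}" using k by simp
  ultimately show ?thesis by blast
qed

end
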